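(* Let $x,y$ be non-commuting indeterminates and $C=xyx^{-1}y^{-1}$. Let $(R_n)_{n\in\mathbb Z}$ be the solution of $$R_{n+1}CR_{n-1}=R_n^2+1\qquad(n\in\mathbb Z)$$ with $R_0=yxy^{-1}$ and $R_1=y$. Set $$y_1=R_1R_0^{-1},\qquad y_2=R_1^{-1}R_0^{-1},\qquad y_3=R_1^{-1}R_0.$$ Then, as formal power series in a central variable $t$, $$\sum_{n\ge0}t^nR_n=\Big(1-t\big(1-t(1-ty_3)^{-1}y_2\big)^{-1}y_1\Big)^{-1}R_0.$$
   Context: Work in the free skew field (non-commutative rational functions) over $\mathbb C$ generated by $x,y$. Formal power series in $t$ with coefficients in this skew field are used, with $t$ commuting with everything. The inverse $(1-tA)^{-1}$ means $\sum_{k\ge0}t^kA^k$. *)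

theory Defs
  imports "HOL-Computational_Algebra.Formal_Power_Series"
begin

definition commC :: "'a::division_ring \<Rightarrow> 'a \<Rightarrow> 'a" where
  "commC x y = x * y * inverse x * inverse y"

end

theory Submission
  imports Defs
begin

text \<open>
  For consecutive terms \<open>a, b, c\<close> the relation \<open>a b = b C a\<close> holds for the initial pair and
  propagates along the recurrence; it gives \<open>C = b\<inverse> a b a\<inverse>\<close> and \<open>c = (b + b\<inverse>) a\<inverse> b\<close>.
  Hence \<open>K = b a\<inverse> + b\<inverse> a\<inverse> + b\<inverse> a\<close> is conserved, and the sequence satisfies the linear
  recurrence \<open>R(n+2) = K R(n+1) - C R(n)\<close> with constant left coefficients
  \<open>K = y\<^sub>1 + y\<^sub>2 + y\<^sub>3\<close> and \<open>C = y\<^sub>3 y\<^sub>1\<close>. The generating function of such a recurrence is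
  found by peeling off the factors \<open>1 - t y\<^sub>3\<close>, \<open>1 - t(\<dots>)y\<^sub>2\<close> and \<open>1 - t(\<dots>)y\<^sub>1\<close> one at a time.
\<close>

unbundle fps_syntax

lemma nonzero_inverse_mult_cancel_left [simp]:
  "(b::'a::division_ring) \<noteq> 0 \<Longrightarrow> inverse b * (b * z) = z"
  by (simp add: mult.assoc[symmetric])

lemma nonzero_mult_inverse_cancel_left [simp]:
  "(b::'a::division_ring) \<noteq> 0 \<Longrightarrow> b * (inverse b * z) = z"
  by (simp add: mult.assoc[symmetric])

definition recurrence_invariant :: "'a::division_ring \<Rightarrow> 'a \<Rightarrow> 'a" where
  "recurrence_invariant a b = b * inverse a + inverse b * inverse a + inverse b * a"

lemma twisted_commutation_imp_eq:
  fixes a b C :: "'a::division_ring"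
  assumes "a \<noteq> 0" "b \<noteq> 0" and "a * b = b * C * a"
  shows "C = inverse b * a * b * inverse a"
proof -
  have "inverse b * (a * b) * inverse a = inverse b * (b * C * a) * inverse a"
    using assms(3) by simp
  also have "\<dots> = C"
    using assms(1,2) by (simp add: mult.assoc)
  finally show ?thesis by (simp add: mult.assoc)
qed

lemma recurrence_next_term:
  fixes a b c C :: "'a::division_ring"
  assumes a: "a \<noteq> 0" and b: "b \<noteq> 0" and comm: "a * b = b * C * a"
    and rec: "c * C * a = b * b + 1"
  shows "c = (b + inverse b) * inverse a * b"
proof -
  have "b * b + 1 = c * inverse b * a * b"
    using rec a b by (simp add: twisted_commutation_imp_eq[OF a b comm] mult.assoc)
  then have "(b * b + 1) * inverse b * inverse a * b = c"
    using a b by (simp add: mult.assoc)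
  moreover have "(b * b + 1) * inverse b = b + inverse b"
    using b by (simp add: distrib_right mult.assoc)
  ultimately show ?thesis by simp
qed

lemma recurrence_twisted_commutation_step:
  fixes a b c C :: "'a::division_ring"
  assumes a: "a \<noteq> 0" and b: "b \<noteq> 0" and comm: "a * b = b * C * a"
    and rec: "c * C * a = b * b + 1"
  shows "b * c = c * C * b"
proof -
  note c = recurrence_next_term[OF a b comm rec]
  note C = twisted_commutation_imp_eq[OF a b comm]
  have "b * c = (b * b + 1) * inverse a * b"
    using b by (simp add: c distrib_left distrib_right mult.assoc)
  also have "\<dots> = c * C * b"
    using a b by (simp add: c C distrib_left distrib_right mult.assoc)
  finally show ?thesis .
qed

lemma recurrence_invariant_step:
  fixes a b c :: "'a::division_ring"
  assumes a: "a \<noteq> 0" and b: "b \<noteq> 0" and c0: "c \<noteq> 0"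
    and c: "c = (b + inverse b) * inverse a * b"
  shows "recurrence_invariant b c = recurrence_invariant a b"
proof -
  define P where "P = b + inverse b"
  have P: "P \<noteq> 0" using c c0 P_def by auto
  have c': "c = P * (inverse a * b)" using c P_def by (simp add: mult.assoc)
  have "inverse c * inverse b + inverse c * b = inverse c * P"
    by (simp add: P_def distrib_left add.commute)
  also have "\<dots> = inverse b * a"
    using a b P by (simp add: c' nonzero_inverse_mult_distrib mult.assoc)
  finally have "inverse c * inverse b + inverse c * b = inverse b * a" .
  moreover have "c * inverse b = b * inverse a + inverse b * inverse a"
    using b by (simp add: c' P_def mult.assoc distrib_right)
  ultimately show ?thesis
    unfolding recurrence_invariant_def by (simp add: add.assoc)
qed

lemma recurrence_twisted_commutation:
  fixes r :: "nat \<Rightarrow> 'a::division_ring"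
  assumes nz: "\<And>k. r k \<noteq> 0"
    and rec: "\<And>k. r (Suc (Suc k)) * C * r k = r (Suc k) * r (Suc k) + 1"
    and comm0: "r 0 * r 1 = r 1 * C * r 0"
  shows "r k * r (Suc k) = r (Suc k) * C * r k"
proof (induction k)
  case 0
  then show ?case using comm0 by simp
next
  case (Suc k)
  show ?case by (rule recurrence_twisted_commutation_step[OF nz nz Suc rec])
qed

lemma recurrence_linearization:
  fixes r :: "nat \<Rightarrow> 'a::division_ring"
  assumes nz: "\<And>k. r k \<noteq> 0"
    and rec: "\<And>k. r (Suc (Suc k)) * C * r k = r (Suc k) * r (Suc k) + 1"
    and comm0: "r 0 * r 1 = r 1 * C * r 0"
  shows "r (Suc (Suc k)) = recurrence_invariant (r 0) (r 1) * r (Suc k) - C * r k"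
proof -
  note comm = recurrence_twisted_commutation[OF nz rec comm0]
  note next_term = recurrence_next_term[OF nz nz comm rec]
  have invariant: "recurrence_invariant (r k) (r (Suc k)) = recurrence_invariant (r 0) (r 1)" for k
  proof (induction k)
    case (Suc k)
    then show ?case using recurrence_invariant_step[OF nz nz nz next_term] by simp
  qed simp
  have "r (Suc (Suc k)) = (r (Suc k) + inverse (r (Suc k))) * inverse (r k) * r (Suc k)"
    by (rule next_term)
  also have "\<dots> = recurrence_invariant (r k) (r (Suc k)) * r (Suc k) - C * r k"
    using nz[of k] nz[of "Suc k"]
    by (simp add: recurrence_invariant_def twisted_commutation_imp_eq[OF nz nz comm[of k]]
        distrib_right mult.assoc)
  finally show ?thesis by (simp only: invariant)
qed

lemma fps_eq_inverse_mult:
  fixes f g h :: "'a::division_ring fps"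
  assumes "f $ 0 \<noteq> 0" and "f * g = h"
  shows "g = inverse f * h"
  using inverse_mult_eq_1[OF assms(1)] assms(2) by (metis mult.assoc mult_1)

lemma fps_eq_inverse_mult_X:
  fixes a g h :: "'a::division_ring fps"
  assumes "(1 - fps_X * a) * g = fps_X * h"
  shows "g = fps_X * (inverse (1 - fps_X * a) * h)"
  using fps_eq_inverse_mult[OF _ assms] by (simp add: fps_mult_fps_X_commute mult.assoc)

lemma fps_second_order_recurrence:
  fixes r :: "nat \<Rightarrow> 'a::division_ring" and y1 y2 y3 :: 'a
  assumes init: "r 1 = y1 * r 0"
    and rec: "\<And>k. r (Suc (Suc k)) = (y1 + y2 + y3) * r (Suc k) - y3 * y1 * r k"
  shows "Abs_fps r = inverse (1 - fps_X * inverse (1 - fps_X * inverse (1 - fps_X * fps_const y3)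
                                     * fps_const y2) * fps_const y1) * fps_const (r 0)"
proof -
  define F where "F = Abs_fps r"
  define c0 where "c0 = fps_const (r 0)"
  define c1 where "c1 = fps_const y1"
  define c2 where "c2 = fps_const y2"
  define c3 where "c3 = fps_const y3"
  define B where "B = inverse (1 - fps_X * c3)"
  define A where "A = inverse (1 - fps_X * B * c2)"
  have "(1 - fps_X * c3) * (F - c0 - fps_X * (c1 * F)) = fps_X * (c2 * (F - c0))"
  proof (rule fps_ext)
    fix n
    have step: "r (Suc (Suc k)) - y1 * r (Suc k) - y3 * (r (Suc k) - y1 * r k) = y2 * r (Suc k)"
      for k by (subst rec) (simp add: algebra_simps)
    show "((1 - fps_X * c3) * (F - c0 - fps_X * (c1 * F))) $ n = (fps_X * (c2 * (F - c0))) $ n"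
    proof (cases n)
      case (Suc m)
      then show ?thesis using init step[of "m - 1"]
        by (cases m) (simp_all add: F_def c0_def c1_def c2_def c3_def algebra_simps)
    qed (simp add: F_def c0_def c1_def c3_def)
  qed
  then have "F - c0 - fps_X * (c1 * F) = fps_X * (B * (c2 * (F - c0)))"
    unfolding B_def by (rule fps_eq_inverse_mult_X)
  then have "(1 - fps_X * B * c2) * (F - c0) = fps_X * (c1 * F)"
    by (simp add: algebra_simps mult.assoc)
  then have "F - c0 = fps_X * (A * (c1 * F))"
    unfolding A_def mult.assoc by (rule fps_eq_inverse_mult_X)
  then have "(1 - fps_X * A * c1) * F = c0"
    by (simp add: algebra_simps mult.assoc)
  then have "F = inverse (1 - fps_X * A * c1) * c0"
    by (rule fps_eq_inverse_mult[rotated]) simp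
  then show ?thesis unfolding F_def A_def B_def c0_def c1_def c2_def c3_def .
qed

theorem theorem3p3:
  fixes x y :: "'a::{division_ring, ring_char_0}" and R :: "int \<Rightarrow> 'a"
  assumes "x \<noteq> 0" and "y \<noteq> 0" and "x * y \<noteq> y * x"
    and rec: "\<And>n. R (n + 1) * commC x y * R (n - 1) = (R n)\<^sup>2 + 1"
    and R0: "R 0 = y * x * inverse y" and R1: "R 1 = y"
    and Rnz: "\<And>n. R n \<noteq> 0"
  shows "Abs_fps (\<lambda>n. R (int n)) =
    inverse (1 - fps_X * inverse (1 - fps_X * inverse (1 - fps_X * fps_const (inverse (R 1) * R 0))
                                     * fps_const (inverse (R 1) * inverse (R 0)))
                 * fps_const (R 1 * inverse (R 0)))
    * fps_const (R 0)"
proof -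
  define r where "r n = R (int n)" for n
  have nz: "r k \<noteq> 0" for k using Rnz r_def by simp
  have rec_nat: "r (Suc (Suc k)) * commC x y * r k = r (Suc k) * r (Suc k) + 1" for k
    using rec[of "int k + 1"] unfolding r_def by (simp add: power2_eq_square add.assoc add.commute)
  have comm0: "r 0 * r 1 = r 1 * commC x y * r 0"
    unfolding r_def using assms(1,2) by (simp add: R0 R1 commC_def mult.assoc)
  have "commC x y = inverse (r 1) * r 0 * (r 1 * inverse (r 0))"
    using twisted_commutation_imp_eq[OF nz nz comm0] by (simp add: mult.assoc)
  then have "r (Suc (Suc k)) = (r 1 * inverse (r 0) + inverse (r 1) * inverse (r 0) + inverse (r 1) * r 0)
      * r (Suc k) - inverse (r 1) * r 0 * (r 1 * inverse (r 0)) * r k" for k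
    using recurrence_linearization[OF nz rec_nat comm0] by (simp add: recurrence_invariant_def)
  moreover have "r 1 = r 1 * inverse (r 0) * r 0" using nz[of 0] by (simp add: mult.assoc)
  ultimately show ?thesis
    using fps_second_order_recurrence[of r] by (simp add: r_def[abs_def])
qed

end
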